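(* For any sequence $(\mu_n)_{n\ge1}$ with $\mu_n\in\mathbb{R}^{\mathbb{L}_n}$ (regarded as an element of $\mathbb{R}^{\mathbb{T}_n}$ vanishing off $\mathbb{L}_n$), the law of $h$ under ${\rm P}_n$ and the law of $h+\mu_n$ under ${\rm P}_n^+$ are asymptotically mutually singular: there exist measurable sets $A_n\subset\mathbb{R}^{\mathbb{T}_n}$ such that $$\lim_{n\to\infty}{\rm P}_n(h\in A_n)=1,\qquad\lim_{n\to\infty}{\rm P}_n^+(h+\mu_n\in A_n)=0.$$
   Context: $\mathbb{T}$ is the infinite rooted binary tree with root $0$; $|x|$ is the depth of $x$ and $x\wedge y$ the deepest common ancestor of $x,y$; $\mathbb{T}_n$, $\mathbb{L}_n$ are the vertices of depth at most / exactly $n$. $h$ is the centered Gaussian field on $\mathbb{T}$ with ${\rm E}[h(x)h(y)]=|x\wedge y|$ (binary branching random walk with standard Gaussian steps, $h(0)=0$); ${\rm P}_n$ is its law on $\mathbb{R}^{\mathbb{T}_n}$, and ${\rm P}_n^+={\rm P}_n(\cdot\mid h(x)\ge0\ \forall x\in\mathbb{L}_n)$. *)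

theory Defs
  imports "HOL-Probability.Probability"
begin

text \<open>Vertices of the infinite rooted binary tree are finite bool lists (the path
from the root); the root is the empty list and the depth is the length.\<close>

type_synonym vertex = "bool list"

definition Tn :: "nat \<Rightarrow> vertex set" where
  "Tn n = {x. length x \<le> n}"

definition Ln :: "nat \<Rightarrow> vertex set" where
  "Ln n = {x. length x = n}"

definition field_space :: "nat \<Rightarrow> (vertex \<Rightarrow> real) measure" where
  "field_space n = PiM (Tn n) (\<lambda>_. borel)"

definition increments :: "nat \<Rightarrow> (vertex \<Rightarrow> real) measure" where
  "increments n = PiM (Tn n - {[]}) (\<lambda>_. density lborel std_normal_density)"

definition brw :: "nat \<Rightarrow> (vertex \<Rightarrow> real) \<Rightarrow> (vertex \<Rightarrow> real)" where
  "brw n g = (\<lambda>x\<in>Tn n. \<Sum>k\<in>{1..length x}. g (take k x))"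

definition Pn :: "nat \<Rightarrow> (vertex \<Rightarrow> real) measure" where
  "Pn n = distr (increments n) (field_space n) (brw n)"

definition pos_event :: "nat \<Rightarrow> (vertex \<Rightarrow> real) set" where
  "pos_event n = {h \<in> space (field_space n). \<forall>x\<in>Ln n. h x \<ge> 0}"

definition Pn_plus :: "nat \<Rightarrow> (vertex \<Rightarrow> real) set \<Rightarrow> real" where
  "Pn_plus n S = measure (Pn n) (S \<inter> pos_event n) / measure (Pn n) (pos_event n)"

definition shift :: "nat \<Rightarrow> (vertex \<Rightarrow> real) \<Rightarrow> (vertex \<Rightarrow> real) \<Rightarrow> (vertex \<Rightarrow> real)" where
  "shift n \<mu> h = (\<lambda>x\<in>Tn n. h x + (if x \<in> Ln n then \<mu> x else 0))"

end

theory Submission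
  imports Defs
begin

text \<open>
  Fix \<open>j\<close> and \<open>b\<close> and let \<open>A\<^sub>n\<close> be the event that \<open>h \<le> j * b\<close> at no fewer than
  \<open>2 ^ (n - 2 - j)\<close> vertices of generation \<open>n - 1\<close>.

  Under \<open>P\<^sub>n\<close>, \<open>A\<^sub>n\<close> fails only if some increment in the first \<open>j\<close> generations exceeds \<open>b\<close>
  (probability at most \<open>2 ^ (j + 1) * P(N > b)\<close>), or if below every vertex \<open>z\<close> of generation
  \<open>j\<close> strictly more descendants in generation \<open>n - 1\<close> gain than lose along their path from \<open>z\<close>.
  Flipping the signs of all increments below a set \<open>T\<close> of generation-\<open>j\<close> vertices preserves
  the law, and the \<open>2 ^ 2 ^ j\<close> flipped copies of the latter event are disjoint, so it has
  probability at most \<open>2 ^ - 2 ^ j\<close>. Otherwise half of the descendants of some such \<open>z\<close> end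
  below \<open>j * b\<close>.

  The shift by \<open>\<mu>\<^sub>n\<close> does not touch generation \<open>n - 1\<close>, so \<open>A\<^sub>n\<close> is shift invariant.
  Given the increments down to generation \<open>n - 1\<close>, every low vertex there forces the increments
  to its children to be at least \<open>- j * b\<close>, hence \<open>P\<^sub>n(A\<^sub>n, h \<ge> 0 on L\<^sub>n) \<le> q ^ 2 ^ (n - 2 - j)\<close>
  with \<open>q = P(N \<ge> - j * b) < 1\<close>. On the other hand, pushing every path up by \<open>s\<close> during its
  first half and letting it lose at most \<open>s\<close> per step afterwards shows
  \<open>P\<^sub>n(h \<ge> 0 on L\<^sub>n) \<ge> r ^ 2 ^ (n div 2 + 2) * u ^ 2 ^ (n + 1)\<close> with \<open>r = P(N \<ge> s)\<close> and
  \<open>u = P(N \<ge> - s)\<close>. Choosing \<open>s\<close> with \<open>q < u ^ 2 ^ (j + 3)\<close> makes \<open>P\<^sub>n\<^sup>+(A\<^sub>n)\<close> decay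
  doubly exponentially. A diagonal choice of \<open>j\<close> and \<open>b\<close> along \<open>n\<close> finishes the proof.
\<close>

section \<open>The standard normal distribution\<close>

abbreviation std_normal :: "real measure" where
  "std_normal \<equiv> density lborel std_normal_density"

lemma real_distribution_std_normal: "real_distribution std_normal"
  unfolding real_distribution_def real_distribution_axioms_def
  by (simp add: prob_space_normal_density)

lemma prob_space_std_normal: "prob_space std_normal"
  using real_distribution_std_normal by (simp add: real_distribution_def)

lemma distr_std_normal_uminus: "distr std_normal borel uminus = std_normal"
proof -
  have "distr std_normal borel uminus = density (distr lborel borel uminus) std_normal_density"
    by (subst density_distr) (simp_all add: std_normal_density_def)
  also have "\<dots> = std_normal"
    by (simp add: lborel_distr_uminus)
  finally show ?thesis .
qed

lemma measure_std_normal_pos: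
  assumes A: "A \<in> sets borel" and pos: "0 < emeasure lborel A"
  shows "0 < measure std_normal A"
proof (rule ccontr)
  interpret prob_space std_normal by (rule prob_space_std_normal)
  assume "\<not> 0 < measure std_normal A"
  then have "A \<in> null_sets std_normal"
    using A measure_nonneg[of std_normal A] by (simp add: null_sets_def emeasure_eq_measure)
  then have "AE x\<in>A in lborel. std_normal_density x = 0"
    by (simp add: null_sets_density_iff)
  moreover have "std_normal_density x \<noteq> 0" for x
    using normal_density_pos[of 1 0 x] by simp
  ultimately have "AE x in lborel. x \<notin> A"
    by (auto elim: AE_mp)
  then have "A \<in> null_sets lborel"
    using A by (simp add: AE_iff_null_sets)
  then show False
    using pos by (simp add: null_sets_def)
qed

lemma measure_std_normal_atLeast_pos: "0 < measure std_normal {x..}"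
proof (rule measure_std_normal_pos)
  have "emeasure lborel {x..x+1} \<le> emeasure lborel {x..}"
    by (rule emeasure_mono) auto
  then show "0 < emeasure lborel {x..}"
    by (simp add: order_less_le_trans[of 0 1])
qed simp

lemma measure_std_normal_atLeast_less_1: "measure std_normal {x..} < 1"
proof -
  have "emeasure lborel {x-1..<x} \<le> emeasure lborel {..<x}"
    by (rule emeasure_mono) auto
  then have "0 < measure std_normal {..<x}"
    by (intro measure_std_normal_pos) (simp_all add: order_less_le_trans[of 0 1])
  moreover have "measure std_normal {x..} = 1 - measure std_normal {..<x}"
    using prob_space.prob_compl[OF prob_space_std_normal, of "{..<x}"]
    by (simp add: Compl_eq_Diff_UNIV[symmetric])
  ultimately show ?thesis by simp
qed

lemma measure_std_normal_greaterThan_tendsto_0: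
  "((\<lambda>b. measure std_normal {b<..}) \<longlongrightarrow> 0) at_top"
proof -
  interpret real_distribution std_normal by (rule real_distribution_std_normal)
  have "measure std_normal {b<..} = 1 - cdf std_normal b" for b
    using prob_compl[of "{..b}"] by (simp add: cdf_def Compl_eq_Diff_UNIV[symmetric])
  then show ?thesis
    using tendsto_diff[OF tendsto_const cdf_lim_at_top_prob, of 1] by simp
qed

lemma measure_std_normal_atLeast_tendsto_1:
  "((\<lambda>x. measure std_normal {x..}) \<longlongrightarrow> 1) at_bot"
proof (rule tendsto_sandwich)
  interpret real_distribution std_normal by (rule real_distribution_std_normal)
  have "1 - cdf std_normal x \<le> measure std_normal {x..}" for x
  proof -
    have "prob {..<x} \<le> cdf std_normal x"
      unfolding cdf_def by (rule finite_measure_mono) auto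
    then show ?thesis
      using prob_compl[of "{..<x}"] by (simp add: Compl_eq_Diff_UNIV[symmetric])
  qed
  then show "\<forall>\<^sub>F x in at_bot. 1 - cdf std_normal x \<le> measure std_normal {x..}"
    by simp
  show "\<forall>\<^sub>F x in at_bot. measure std_normal {x..} \<le> 1"
    by (simp add: prob_le_1)
  show "((\<lambda>x. 1 - cdf std_normal x) \<longlongrightarrow> 1) at_bot"
    using tendsto_diff[OF tendsto_const cdf_lim_at_bot, of 1] by simp
qed simp

lemma exists_measure_std_normal_atLeast_power_gt:
  assumes "q < 1"
  shows "\<exists>s\<ge>0. q < measure std_normal {- s..} ^ k"
proof -
  have "((\<lambda>x. measure std_normal {x..} ^ k) \<longlongrightarrow> 1) at_bot"
    using tendsto_power[OF measure_std_normal_atLeast_tendsto_1, of k] by simp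
  then have "\<forall>\<^sub>F x in at_bot. q < measure std_normal {x..} ^ k \<and> x \<le> 0"
    using assms by (intro eventually_conj order_tendstoD(1) eventually_le_at_bot)
  then obtain x where "q < measure std_normal {x..} ^ k" "x \<le> 0"
    by (auto simp: eventually_at_bot_linorder)
  then show ?thesis
    by (intro exI[of _ "- x"]) simp
qed

section \<open>Product measures, counting and limits\<close>

lemma measure_PiM_PiE_if:
  assumes "prob_space M" "finite I" "C \<in> sets M" "D \<in> sets M"
  shows "measure (PiM I (\<lambda>_. M)) (PiE I (\<lambda>i. if P i then C else D))
           = measure M C ^ card {i\<in>I. P i} * measure M D ^ card {i\<in>I. \<not> P i}"
proof -
  interpret product_prob_space "\<lambda>_. M" I
    by (rule product_prob_spaceI) fact
  interpret finite_product_prob_space "\<lambda>_. M" I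
    by unfold_locales fact
  have "measure (PiM I (\<lambda>_. M)) (PiE I (\<lambda>i. if P i then C else D))
          = (\<Prod>i\<in>I. measure M (if P i then C else D))"
    by (rule prob_times) (simp add: assms)
  also have "\<dots> = (\<Prod>i\<in>I. if P i then measure M C else measure M D)"
    by (simp only: if_distrib)
  also have "\<dots> = measure M C ^ card (I \<inter> {i. P i}) * measure M D ^ card (I \<inter> - {i. P i})"
    by (simp add: prod.If_cases \<open>finite I\<close>)
  finally show ?thesis
    by (simp add: Int_def)
qed

lemma (in product_prob_space) distr_PiM_coordinatewise:
  assumes "finite I"
    and f: "\<And>i. i \<in> I \<Longrightarrow> f i \<in> measurable (M i) (M i)"
    and preserving: "\<And>i. i \<in> I \<Longrightarrow> distr (M i) (M i) (f i) = M i"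
  shows "distr (PiM I M) (PiM I M) (\<lambda>x. \<lambda>i\<in>I. f i (x i)) = PiM I M"
proof (rule PiM_eqI[OF \<open>finite I\<close>])
  have meas: "(\<lambda>x. \<lambda>i\<in>I. f i (x i)) \<in> measurable (PiM I M) (PiM I M)"
    using f by (intro measurable_restrict measurable_compose[OF measurable_component_singleton]) auto
  fix A assume A: "\<And>i. i \<in> I \<Longrightarrow> A i \<in> sets (M i)"
  have "(\<lambda>x. \<lambda>i\<in>I. f i (x i)) -` PiE I A \<inter> space (PiM I M) = PiE I (\<lambda>i. f i -` A i \<inter> space (M i))"
    using f[THEN measurable_space] by (auto simp: space_PiM PiE_iff)
  moreover have "emeasure (M i) (f i -` A i \<inter> space (M i)) = emeasure (M i) (A i)" if "i \<in> I" for i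
    using emeasure_distr[OF f A, OF that that] preserving[OF that] by simp
  ultimately show "emeasure (distr (PiM I M) (PiM I M) (\<lambda>x. \<lambda>i\<in>I. f i (x i))) (PiE I A)
               = (\<Prod>i\<in>I. emeasure (M i) (A i))"
    using A f meas
    by (simp add: emeasure_distr sets_PiM_I_finite \<open>finite I\<close> emeasure_PiM measurable_sets)
qed simp

lemma (in prob_space) card_mult_prob_le_1_of_disjoint_preimages:
  assumes "finite X" and B: "B \<in> events"
    and \<phi>: "\<And>x. x \<in> X \<Longrightarrow> \<phi> x \<in> measurable M M" "\<And>x. x \<in> X \<Longrightarrow> distr M M (\<phi> x) = M"
    and disj: "disjoint_family_on (\<lambda>x. \<phi> x -` B \<inter> space M) X"
  shows "real (card X) * prob B \<le> 1"
proof -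
  have "prob (\<phi> x -` B \<inter> space M) = prob B" if "x \<in> X" for x
    using measure_distr[OF \<phi>(1) B, OF that] \<phi>(2)[OF that] by simp
  then have "real (card X) * prob B = (\<Sum>x\<in>X. prob (\<phi> x -` B \<inter> space M))"
    by simp
  also have "\<dots> = prob (\<Union>x\<in>X. \<phi> x -` B \<inter> space M)"
    using \<phi>(1) B \<open>finite X\<close> disj by (intro finite_measure_finite_Union[symmetric]) auto
  also have "\<dots> \<le> 1"
    by (rule prob_le_1)
  finally show ?thesis .
qed

lemma of_nat_card_filter: "finite A \<Longrightarrow> of_nat (card {x \<in> A. P x}) = (\<Sum>x\<in>A. if P x then 1 else 0)"
  by (simp add: sum.inter_filter[symmetric])

lemma sum_plus_minus_nonneg:
  fixes s :: real and k n :: nat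
  assumes "k \<le> n" "n \<le> 2 * k" "0 \<le> s"
  shows "0 \<le> (\<Sum>t\<in>{1..n}. if t \<le> k then s else - s)"
proof -
  have "(\<Sum>t\<in>{1..n}. if t \<le> k then s else - s)
          = (\<Sum>t\<in>{1..n} \<inter> {t. t \<le> k}. s) + (\<Sum>t\<in>{1..n} \<inter> - {t. t \<le> k}. - s)"
    by (rule sum.If_cases) simp
  also have "{1..n} \<inter> {t. t \<le> k} = {1..k}"
    using assms(1) by auto
  also have "{1..n} \<inter> - {t. t \<le> k} = {Suc k..n}"
    by auto
  also have "(\<Sum>t\<in>{1..k}. s) + (\<Sum>t\<in>{Suc k..n}. - s) = (real k - real (n - k)) * s"
    by (simp add: algebra_simps)
  finally show ?thesis
    using assms by simp
qed

lemma card_le_twice_card_nonpos: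
  fixes f :: "'a \<Rightarrow> real"
  assumes "finite D" "card {y \<in> D. 0 < f y} \<le> card {y \<in> D. f y < 0}"
  shows "card D \<le> 2 * card {y \<in> D. f y \<le> 0}"
proof -
  have "card D = card {y \<in> D. f y \<le> 0} + card {y \<in> D. 0 < f y}"
    using assms(1) by (subst card_Un_disjoint[symmetric]) (auto intro: arg_cong[where f = card])
  moreover have "card {y \<in> D. f y < 0} \<le> card {y \<in> D. f y \<le> 0}"
    using assms(1) by (intro card_mono) auto
  ultimately show ?thesis
    using assms(2) by linarith
qed

lemma filterlim_div_2_minus_at_top: "filterlim (\<lambda>n::nat. n div 2 - c) at_top sequentially"
  unfolding filterlim_at_top
proof
  fix Z
  show "\<forall>\<^sub>F n in sequentially. Z \<le> n div 2 - c"
    using eventually_ge_at_top[of "2 * (Z + c)"]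
    by eventually_elim (use div_le_mono[of "2 * (Z + c)" _ 2] in auto)
qed

lemma power_two_power_ratio_tendsto_0:
  fixes \<rho> r :: real and a b :: "'a \<Rightarrow> nat"
  assumes "0 \<le> \<rho>" "\<rho> < 1" "0 < r"
    and "filterlim (\<lambda>x. a x - b x) at_top F" "filterlim b at_top F"
  shows "((\<lambda>x. \<rho> ^ 2 ^ a x / r ^ 2 ^ b x) \<longlongrightarrow> 0) F"
proof (rule tendsto_sandwich)
  have "norm \<rho> < 1"
    using assms(1,2) by simp
  from filterlim_compose[OF LIMSEQ_power_zero[OF this] assms(4)]
  have "((\<lambda>x. \<rho> ^ (a x - b x)) \<longlongrightarrow> 0) F"
    by (simp add: o_def)
  then have "\<forall>\<^sub>F x in F. \<rho> ^ (a x - b x) < r / 2"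
    using assms(3) by (intro order_tendstoD(2)) auto
  moreover have "\<forall>\<^sub>F x in F. 1 \<le> a x - b x"
    using assms(4) by (simp add: filterlim_at_top)
  ultimately show "\<forall>\<^sub>F x in F. \<rho> ^ 2 ^ a x / r ^ 2 ^ b x \<le> (1 / 2) ^ b x"
  proof eventually_elim
    case (elim x)
    have "a x = (a x - b x) + b x"
      using elim(2) by simp
    then have "\<rho> ^ 2 ^ a x / r ^ 2 ^ b x = (\<rho> ^ 2 ^ (a x - b x) / r) ^ 2 ^ b x"
      by (metis power_add power_mult power_divide)
    also have "\<dots> \<le> (1 / 2) ^ 2 ^ b x"
    proof (rule power_mono)
      have "\<rho> ^ 2 ^ (a x - b x) \<le> \<rho> ^ (a x - b x)"
        using assms(1,2) by (intro power_decreasing) (simp_all add: less_imp_le)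
      then show "\<rho> ^ 2 ^ (a x - b x) / r \<le> 1 / 2"
        using elim(1) assms(3) by (simp add: divide_simps)
    qed (use assms in \<open>simp add: less_imp_le\<close>)
    also have "\<dots> \<le> (1 / 2) ^ b x"
      by (intro power_decreasing) (simp_all add: less_imp_le)
    finally show ?case .
  qed
  show "\<forall>\<^sub>F x in F. 0 \<le> \<rho> ^ 2 ^ a x / r ^ 2 ^ b x"
    using assms by simp
  show "((\<lambda>x. (1 / 2 :: real) ^ b x) \<longlongrightarrow> 0) F"
    using filterlim_compose[OF LIMSEQ_power_zero[of "1 / 2 :: real"] assms(5)] by (simp add: o_def)
qed simp

lemma diagonal_tendsto_0:
  fixes D :: "nat \<Rightarrow> 'a \<Rightarrow> real" and S :: "nat \<Rightarrow> 'a set"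
  assumes approx: "\<And>e. 0 < e \<Longrightarrow> \<exists>A. (\<forall>n. A n \<in> S n) \<and> (\<forall>\<^sub>F n in sequentially. D n (A n) \<le> e)"
    and nonneg: "\<And>n A. 0 \<le> D n A"
  shows "\<exists>A. (\<forall>n. A n \<in> S n) \<and> (\<lambda>n. D n (A n)) \<longlonglongrightarrow> 0"
proof -
  have "\<forall>m. \<exists>A N. (\<forall>n. A n \<in> S n) \<and> (\<forall>n\<ge>N. D n (A n) \<le> inverse (real (Suc m)))"
    using approx[of "inverse (real (Suc _))"] by (simp add: eventually_sequentially)
  then obtain A N where A: "\<And>m n. A m n \<in> S n"
    and N: "\<And>m n. N m \<le> n \<Longrightarrow> D n (A m n) \<le> inverse (real (Suc m))"
    by metis
  define J where "J n = Max {m. m \<le> n \<and> N m \<le> n}" for n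
  have J: "m \<le> J n \<and> N (J n) \<le> n" if "m \<le> n" "N m \<le> n" for m n
  proof -
    have "finite {m. m \<le> n \<and> N m \<le> n}" "m \<in> {m. m \<le> n \<and> N m \<le> n}"
      using that by auto
    from Max_ge[OF this] Max_in[OF this(1)] show ?thesis
      unfolding J_def using that by auto
  qed
  have "filterlim J at_top sequentially"
    unfolding filterlim_at_top eventually_sequentially using J by (metis max.boundedE)
  then have lim: "(\<lambda>n. inverse (real (Suc (J n)))) \<longlonglongrightarrow> 0"
    using filterlim_compose[OF LIMSEQ_inverse_real_of_nat] by (simp add: o_def)
  have "\<forall>\<^sub>F n in sequentially. 0 \<le> D n (A (J n) n)"
    by (simp add: nonneg)
  moreover have "\<forall>\<^sub>F n in sequentially. D n (A (J n) n) \<le> inverse (real (Suc (J n)))"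
    using eventually_ge_at_top[of "N 0"]
  proof eventually_elim
    case (elim n)
    then show ?case
      using J[of 0 n] N[of "J n" n] by simp
  qed
  ultimately have "(\<lambda>n. D n (A (J n) n)) \<longlonglongrightarrow> 0"
    by (rule tendsto_sandwich[OF _ _ tendsto_const lim])
  then show ?thesis
    using A by (intro exI[of _ "\<lambda>n. A (J n) n"]) simp
qed

section \<open>The binary tree and the branching random walk\<close>

lemma finite_Tn: "finite (Tn n)"
  using finite_lists_length_le[of "UNIV :: bool set" n] by (simp add: Tn_def)

lemma Ln_subset_Tn: "m \<le> n \<Longrightarrow> Ln m \<subseteq> Tn n"
  by (auto simp: Ln_def Tn_def)

lemma finite_Ln: "finite (Ln n)"
  using finite_Tn Ln_subset_Tn[of n n] by (rule finite_subset[rotated]) simp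

lemma card_Ln: "card (Ln n) = 2 ^ n"
  using card_lists_length_eq[of "UNIV :: bool set" n] by (simp add: Ln_def)

lemma card_Tn_le: "card (Tn n) \<le> 2 ^ (n + 1)"
proof -
  have "Tn n = (\<Union>i\<le>n. Ln i)"
    by (auto simp: Tn_def Ln_def)
  then have "card (Tn n) \<le> (\<Sum>i\<le>n. card (Ln i))"
    by (simp add: card_UN_le)
  also have "\<dots> = (\<Sum>i<Suc n. 2 ^ i)"
    by (simp add: card_Ln lessThan_Suc_atMost)
  also have "\<dots> < 2 ^ (n + 1)"
    by (induction n) auto
  finally show ?thesis by simp
qed

definition descendants :: "nat \<Rightarrow> vertex \<Rightarrow> vertex set" where
  "descendants m z = {y \<in> Ln m. take (length z) y = z}"

lemma card_descendants:
  assumes "length z \<le> m"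
  shows "card (descendants m z) = 2 ^ (m - length z)"
proof -
  have "descendants m z = (\<lambda>w. z @ w) ` Ln (m - length z)"
  proof (intro equalityI subsetI)
    fix y assume "y \<in> descendants m z"
    then have "y = z @ drop (length z) y" "drop (length z) y \<in> Ln (m - length z)"
      by (auto simp: descendants_def Ln_def) (metis append_take_drop_id)
    then show "y \<in> (\<lambda>w. z @ w) ` Ln (m - length z)"
      by blast
  qed (use assms in \<open>auto simp: descendants_def Ln_def\<close>)
  then show ?thesis
    by (simp add: card_image card_Ln inj_on_def)
qed

lemma card_Ln_le_card_Ln_Suc_butlast:
  "card {y \<in> Ln m. P y} \<le> card {l \<in> Ln (Suc m). P (butlast l)}"
  by (rule card_inj_on_le[where f = "\<lambda>y. y @ [True]"])
     (auto simp: inj_on_def Ln_def intro: finite_subset[OF _ finite_Ln[of "Suc m"]])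

lemma prob_space_increments: "prob_space (increments n)"
  unfolding increments_def by (intro prob_space_PiM prob_space_std_normal)

lemma space_increments: "space (increments n) = (Tn n - {[]}) \<rightarrow>\<^sub>E UNIV"
  by (simp add: increments_def space_PiM)

lemma space_field_space: "space (field_space n) = Tn n \<rightarrow>\<^sub>E UNIV"
  by (simp add: field_space_def space_PiM)

lemma increments_component_measurable[measurable]:
  "(\<lambda>g. g i) \<in> borel_measurable (increments n)"
proof (cases "i \<in> Tn n - {[]}")
  case True
  then show ?thesis
    unfolding increments_def by (simp add: measurable_component_singleton)
next
  case False
  then have "g i = undefined" if "g \<in> space (increments n)" for g
    using that by (simp add: space_increments PiE_def extensional_def)
  then show ?thesis
    by (subst measurable_cong[where g = "\<lambda>_. undefined"]) auto
qed

lemma field_component_measurable[measurable]: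
  "(\<lambda>h. h x) \<in> borel_measurable (field_space n)"
proof (cases "x \<in> Tn n")
  case True
  then show ?thesis
    unfolding field_space_def by (rule measurable_component_singleton)
next
  case False
  then have "h x = undefined" if "h \<in> space (field_space n)" for h
    using that by (simp add: space_field_space PiE_def extensional_def)
  then show ?thesis
    by (subst measurable_cong[where g = "\<lambda>_. undefined"]) auto
qed

lemma brw_measurable[measurable]: "brw n \<in> measurable (increments n) (field_space n)"
  unfolding brw_def field_space_def by measurable

lemma prob_space_Pn: "prob_space (Pn n)"
  unfolding Pn_def by (rule prob_space.prob_space_distr[OF prob_space_increments brw_measurable])

lemma measure_Pn:
  "S \<in> sets (field_space n) \<Longrightarrow>
     measure (Pn n) S = measure (increments n) (brw n -` S \<inter> space (increments n))"
  unfolding Pn_def by (rule measure_distr[OF brw_measurable])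

lemma pos_event_sets[measurable]: "pos_event n \<in> sets (field_space n)"
  unfolding pos_event_def using finite_Ln[of n] by measurable

definition path_sum :: "nat \<Rightarrow> (vertex \<Rightarrow> real) \<Rightarrow> vertex \<Rightarrow> real" where
  "path_sum j g y = (\<Sum>t\<in>{Suc j..length y}. g (take t y))"

lemma brw_eq_path_sum: "y \<in> Tn n \<Longrightarrow> brw n g y = path_sum 0 g y"
  by (simp add: brw_def path_sum_def)

lemma path_sum_split:
  assumes "j \<le> length y"
  shows "path_sum 0 g y = path_sum 0 g (take j y) + path_sum j g y"
proof -
  have "{Suc 0..length y} = {Suc 0..j} \<union> {Suc j..length y}"
    using assms by auto
  then have "path_sum 0 g y = (\<Sum>t\<in>{Suc 0..j}. g (take t y)) + path_sum j g y"
    by (simp add: path_sum_def sum.union_disjoint)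
  also have "(\<Sum>t\<in>{Suc 0..j}. g (take t y)) = path_sum 0 g (take j y)"
    using assms by (simp add: path_sum_def min_absorb1 min_absorb2)
  finally show ?thesis .
qed

lemma path_sum_butlast:
  assumes "y \<noteq> []"
  shows "path_sum 0 g y = path_sum 0 g (butlast y) + g y"
  using path_sum_split[of "length y - 1" y g] assms
  by (simp add: path_sum_def butlast_conv_take)

lemma path_sum_cong:
  "(\<And>t. j < t \<Longrightarrow> t \<le> length y \<Longrightarrow> g (take t y) = g' (take t y)) \<Longrightarrow> path_sum j g y = path_sum j g' y"
  by (simp add: path_sum_def)

lemma path_sum_measurable[measurable]: "(\<lambda>g. path_sum j g y) \<in> borel_measurable (increments n)"
  unfolding path_sum_def by measurable

definition many_low_event :: "nat \<Rightarrow> real \<Rightarrow> nat \<Rightarrow> (vertex \<Rightarrow> real) set" where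
  "many_low_event n a K = {h \<in> space (field_space n). K \<le> card {y \<in> Ln (n - 1). h y \<le> a}}"

lemma many_low_event_sets[measurable]: "many_low_event n a K \<in> sets (field_space n)"
proof -
  have "many_low_event n a K
          = {h \<in> space (field_space n). real K \<le> (\<Sum>y\<in>Ln (n - 1). if h y \<le> a then 1 else 0)}"
    by (simp add: many_low_event_def of_nat_card_filter[OF finite_Ln, symmetric])
  also have "\<dots> \<in> sets (field_space n)"
    by measurable
  finally show ?thesis .
qed

lemma shift_preimage_many_low_event:
  assumes "1 \<le> n"
  shows "{h \<in> space (field_space n). shift n \<mu> h \<in> many_low_event n a K} = many_low_event n a K"
proof -
  have "{y \<in> Ln (n - 1). shift n \<mu> h y \<le> a} = {y \<in> Ln (n - 1). h y \<le> a}" for h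
    using assms by (auto simp: shift_def Ln_def Tn_def)
  moreover have "shift n \<mu> h \<in> space (field_space n)" for h
    by (simp add: shift_def space_field_space)
  ultimately show ?thesis
    by (auto simp: many_low_event_def)
qed

section \<open>Under the positivity conditioning many low vertices are unlikely\<close>

lemma brw_in_pos_event_of_box:
  assumes "k \<le> n" "n \<le> 2 * k" "0 \<le> s"
    and g: "g \<in> PiE (Tn n - {[]}) (\<lambda>i. if length i \<le> k then {s..} else {- s..})"
  shows "brw n g \<in> pos_event n"
proof -
  have "0 \<le> brw n g x" if x: "x \<in> Ln n" for x
  proof -
    have "(\<Sum>t\<in>{1..n}. if t \<le> k then s else - s) \<le> (\<Sum>t\<in>{1..n}. g (take t x))"
    proof (rule sum_mono)
      fix t assume "t \<in> {1..n}"
      then have t: "take t x \<in> Tn n - {[]}" "length (take t x) = t"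
        using x by (auto simp: Ln_def Tn_def)
      from g t(1) have "g (take t x) \<in> (if length (take t x) \<le> k then {s..} else {- s..})"
        by (rule PiE_mem)
      then show "(if t \<le> k then s else - s) \<le> g (take t x)"
        using t(2) by (simp split: if_splits)
    qed
    then show ?thesis
      using sum_plus_minus_nonneg[OF assms(1-3)] x Ln_subset_Tn[of n n]
      by (auto simp: brw_eq_path_sum path_sum_def Ln_def)
  qed
  moreover have "g \<in> space (increments n)"
    using g by (auto simp: space_increments PiE_iff)
  ultimately show ?thesis
    using measurable_space[OF brw_measurable] by (auto simp: pos_event_def)
qed

lemma measure_pos_event_ge:
  assumes "k \<le> n" "n \<le> 2 * k" "0 \<le> s"
  shows "measure std_normal {s..} ^ 2 ^ (k + 1) * measure std_normal {- s..} ^ 2 ^ (n + 1)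
           \<le> measure (Pn n) (pos_event n)"
proof -
  interpret N: prob_space std_normal by (rule prob_space_std_normal)
  interpret G: prob_space "increments n" by (rule prob_space_increments)
  let ?I = "Tn n - {[]}"
  define box where "box = PiE ?I (\<lambda>i. if length i \<le> k then {s..} else {- s..})"
  have "box \<subseteq> brw n -` pos_event n \<inter> space (increments n)"
    using brw_in_pos_event_of_box[OF assms] by (auto simp: box_def space_increments PiE_iff)
  then have box_le: "measure (increments n) box \<le> measure (Pn n) (pos_event n)"
    by (simp add: measure_Pn G.finite_measure_mono)
  have "card {i \<in> ?I. length i \<le> k} \<le> 2 ^ (k + 1)"
    using card_mono[OF finite_Tn, of "{i \<in> ?I. length i \<le> k}" k] card_Tn_le[of k]
    by (force simp: Tn_def)
  moreover have "card {i \<in> ?I. \<not> length i \<le> k} \<le> 2 ^ (n + 1)"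
    using card_mono[OF finite_Tn, of "{i \<in> ?I. \<not> length i \<le> k}" n] card_Tn_le[of n]
    by force
  ultimately have "measure std_normal {s..} ^ 2 ^ (k + 1) * measure std_normal {- s..} ^ 2 ^ (n + 1)
      \<le> measure std_normal {s..} ^ card {i \<in> ?I. length i \<le> k}
         * measure std_normal {- s..} ^ card {i \<in> ?I. \<not> length i \<le> k}"
    by (intro mult_mono power_decreasing) (simp_all add: N.prob_le_1)
  also have "\<dots> = measure (increments n) box"
    using measure_PiM_PiE_if[OF prob_space_std_normal, of ?I "{s..}" "{- s..}" "\<lambda>i. length i \<le> k"]
    by (simp add: box_def increments_def finite_Tn)
  finally show ?thesis
    using box_le by linarith
qed

lemma brw_merge_Ln:
  assumes "y \<in> Ln m"
  shows "brw (Suc m) (merge (Tn m - {[]}) J (x, z)) y = path_sum 0 x y"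
proof -
  have "y \<in> Tn (Suc m)"
    using assms by (auto simp: Ln_def Tn_def)
  then have "brw (Suc m) (merge (Tn m - {[]}) J (x, z)) y = path_sum 0 (merge (Tn m - {[]}) J (x, z)) y"
    by (rule brw_eq_path_sum)
  also have "\<dots> = path_sum 0 x y"
    using assms by (intro path_sum_cong) (auto simp: merge_def Ln_def Tn_def)
  finally show ?thesis .
qed

lemma brw_merge_Ln_Suc:
  assumes "l \<in> Ln (Suc m)"
  shows "brw (Suc m) (merge (Tn m - {[]}) (Ln (Suc m)) (x, z)) l = path_sum 0 x (butlast l) + z l"
proof -
  let ?g = "merge (Tn m - {[]}) (Ln (Suc m)) (x, z)"
  have l: "l \<in> Tn (Suc m)" "l \<noteq> []" "butlast l \<in> Ln m" "l \<notin> Tn m"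
    using assms by (auto simp: Ln_def Tn_def)
  have "brw (Suc m) ?g l = path_sum 0 ?g (butlast l) + ?g l"
    using l by (simp add: brw_eq_path_sum path_sum_butlast)
  also have "path_sum 0 ?g (butlast l) = path_sum 0 x (butlast l)"
    using brw_merge_Ln[OF l(3)] Ln_subset_Tn[of m "Suc m"] l(3) by (simp add: brw_eq_path_sum subset_iff)
  also have "?g l = z l"
    using assms l(4) by (simp add: merge_def)
  finally show ?thesis .
qed

lemma emeasure_section_many_low_pos_event_le:
  "emeasure (PiM (Ln (Suc m)) (\<lambda>_. std_normal))
     {z \<in> space (PiM (Ln (Suc m)) (\<lambda>_. std_normal)).
        brw (Suc m) (merge (Tn m - {[]}) (Ln (Suc m)) (x, z)) \<in> many_low_event (Suc m) a K \<inter> pos_event (Suc m)}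
   \<le> measure std_normal {- a..} ^ K"
  (is "emeasure ?M ?S \<le> _")
proof -
  interpret N: prob_space std_normal by (rule prob_space_std_normal)
  interpret M: prob_space ?M by (intro prob_space_PiM prob_space_std_normal)
  let ?g = "\<lambda>z. merge (Tn m - {[]}) (Ln (Suc m)) (x, z)"
  define low where "low = {y \<in> Ln m. path_sum 0 x y \<le> a}"
  have count: "{y \<in> Ln m. brw (Suc m) (?g z) y \<le> a} = low" for z
    by (auto simp: low_def brw_merge_Ln)
  show ?thesis
  proof (cases "K \<le> card low")
    case False
    then have "?S = {}"
      by (auto simp: many_low_event_def count)
    then show ?thesis
      by (simp only: emeasure_empty) simp
  next
    case True
    define box where "box = PiE (Ln (Suc m)) (\<lambda>l. if butlast l \<in> low then {- a..} else UNIV)"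
    have "?S \<subseteq> box"
    proof
      fix z assume z: "z \<in> ?S"
      have "z l \<in> (if butlast l \<in> low then {- a..} else UNIV)" if l: "l \<in> Ln (Suc m)" for l
        using z l by (auto simp: pos_event_def low_def brw_merge_Ln_Suc[OF l])
      moreover have "z \<in> extensional (Ln (Suc m))"
        using z by (simp add: space_PiM PiE_def)
      ultimately show "z \<in> box"
        by (simp add: box_def PiE_iff)
    qed
    then have "emeasure ?M ?S \<le> emeasure ?M box"
      by (intro emeasure_mono) (auto simp: box_def intro!: sets_PiM_I_finite finite_Ln)
    also have "\<dots> = measure std_normal {- a..} ^ card {l \<in> Ln (Suc m). butlast l \<in> low}"
      using measure_PiM_PiE_if[OF prob_space_std_normal finite_Ln[of "Suc m"],
          where C = "{- a..}" and D = UNIV and P = "\<lambda>l. butlast l \<in> low"] N.prob_space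
      by (simp add: box_def M.emeasure_eq_measure)
    also have "\<dots> \<le> measure std_normal {- a..} ^ K"
      using True card_Ln_le_card_Ln_Suc_butlast[of m "\<lambda>y. y \<in> low"]
      by (intro ennreal_leI power_decreasing) (simp_all add: N.prob_le_1 low_def)
    finally show ?thesis .
  qed
qed

lemma measure_many_low_pos_event_le:
  "measure (Pn (Suc m)) (many_low_event (Suc m) a K \<inter> pos_event (Suc m)) \<le> measure std_normal {- a..} ^ K"
proof -
  interpret G: prob_space "increments (Suc m)" by (rule prob_space_increments)
  interpret product_prob_space "\<lambda>_. std_normal" "Tn m - {[]}"
    by (rule product_prob_spaceI) (rule prob_space_std_normal)
  let ?I = "Tn m - {[]}" and ?J = "Ln (Suc m)" and ?E = "many_low_event (Suc m) a K \<inter> pos_event (Suc m)"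
  let ?S = "brw (Suc m) -` ?E \<inter> space (increments (Suc m))"
  have IJ: "?I \<union> ?J = Tn (Suc m) - {[]}" "?I \<inter> ?J = {}"
    by (auto simp: Ln_def Tn_def)
  have S: "?S \<in> sets (PiM (?I \<union> ?J) (\<lambda>_. std_normal))"
    using IJ(1) measurable_sets[OF brw_measurable, of ?E] by (simp add: increments_def)
  have "emeasure (increments (Suc m)) ?S
          = (\<integral>\<^sup>+x. emeasure (PiM ?J (\<lambda>_. std_normal))
                ((\<lambda>z. merge ?I ?J (x, z)) -` ?S \<inter> space (PiM ?J (\<lambda>_. std_normal))) \<partial>PiM ?I (\<lambda>_. std_normal))"
    using emeasure_fold_integral[OF IJ(2) _ finite_Ln S] finite_Tn IJ(1) by (simp add: increments_def)
  also have "\<dots> \<le> (\<integral>\<^sup>+x. measure std_normal {- a..} ^ K \<partial>PiM ?I (\<lambda>_. std_normal))"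
  proof (rule nn_integral_mono)
    fix x assume x: "x \<in> space (PiM ?I (\<lambda>_. std_normal))"
    have "merge ?I ?J (x, z) \<in> space (increments (Suc m))" if "z \<in> space (PiM ?J (\<lambda>_. std_normal))" for z
      using x that IJ unfolding increments_def IJ(1)[symmetric] space_PiM by (simp add: PiE_iff)
    then have "(\<lambda>z. merge ?I ?J (x, z)) -` ?S \<inter> space (PiM ?J (\<lambda>_. std_normal))
                 = {z \<in> space (PiM ?J (\<lambda>_. std_normal)). brw (Suc m) (merge ?I ?J (x, z)) \<in> ?E}"
      by auto
    then show "emeasure (PiM ?J (\<lambda>_. std_normal))
                 ((\<lambda>z. merge ?I ?J (x, z)) -` ?S \<inter> space (PiM ?J (\<lambda>_. std_normal)))
               \<le> measure std_normal {- a..} ^ K"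
      using emeasure_section_many_low_pos_event_le by simp
  qed
  also have "\<dots> = measure std_normal {- a..} ^ K"
    by (simp add: P.emeasure_space_1)
  finally show ?thesis
    by (simp add: measure_Pn G.emeasure_eq_measure)
qed

lemma Pn_plus_many_low_event_le:
  assumes "j + 2 \<le> n" "0 \<le> s"
  shows "Pn_plus n (many_low_event n a (2 ^ (n - 2 - j)))
           \<le> (measure std_normal {- a..} / measure std_normal {- s..} ^ 2 ^ (j + 3)) ^ 2 ^ (n - 2 - j)
              / measure std_normal {s..} ^ 2 ^ (n - n div 2 + 1)"
proof -
  let ?q = "measure std_normal {- a..}" and ?r = "measure std_normal {s..}"
    and ?u = "measure std_normal {- s..}" and ?K = "2 ^ (n - 2 - j) :: nat"
  obtain m where n: "n = Suc m"
    using assms(1) gr0_implies_Suc[of n] by auto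
  have u: "0 < ?u" and r: "0 < ?r"
    by (simp_all add: measure_std_normal_atLeast_pos)
  have "n + 1 = (j + 3) + (n - 2 - j)"
    using assms(1) by simp
  then have u_pow: "?u ^ 2 ^ (n + 1) = (?u ^ 2 ^ (j + 3)) ^ ?K"
    by (metis power_add power_mult)
  have "n div 2 * 2 \<le> n"
    by simp
  then have den: "?r ^ 2 ^ (n - n div 2 + 1) * ?u ^ 2 ^ (n + 1) \<le> measure (Pn n) (pos_event n)"
    by (intro measure_pos_event_ge assms(2)) linarith+
  have num: "measure (Pn n) (many_low_event n a ?K \<inter> pos_event n) \<le> ?q ^ ?K"
    unfolding n by (rule measure_many_low_pos_event_le)
  have "Pn_plus n (many_low_event n a ?K) \<le> ?q ^ ?K / (?r ^ 2 ^ (n - n div 2 + 1) * ?u ^ 2 ^ (n + 1))"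
    unfolding Pn_plus_def by (rule frac_le[OF _ num _ den]) (use u r in simp_all)
  also have "\<dots> = (?q / ?u ^ 2 ^ (j + 3)) ^ ?K / ?r ^ 2 ^ (n - n div 2 + 1)"
    by (simp only: u_pow power_divide divide_divide_eq_left mult.commute)
  finally show ?thesis .
qed

lemma Pn_plus_many_low_event_tendsto_0:
  "(\<lambda>n. Pn_plus n (many_low_event n a (2 ^ (n - 2 - j)))) \<longlonglongrightarrow> 0"
proof -
  let ?q = "measure std_normal {- a..}"
  obtain s where s: "0 \<le> s" "?q < measure std_normal {- s..} ^ 2 ^ (j + 3)"
    using exists_measure_std_normal_atLeast_power_gt[OF measure_std_normal_atLeast_less_1] by blast
  define \<rho> where "\<rho> = ?q / measure std_normal {- s..} ^ 2 ^ (j + 3)"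
  have \<rho>: "0 \<le> \<rho>" "\<rho> < 1"
    using s measure_std_normal_atLeast_pos[of "- s"] by (simp_all add: \<rho>_def)
  have half: "n div 2 * 2 \<le> n" for n :: nat
    by simp
  have "filterlim (\<lambda>n. (n - 2 - j) - (n - n div 2 + 1)) at_top sequentially"
    by (rule filterlim_at_top_mono[OF filterlim_div_2_minus_at_top[of "j + 3"]])
       (use half in \<open>auto intro!: always_eventually\<close>)
  moreover have "filterlim (\<lambda>n. n - n div 2 + 1) at_top sequentially"
    by (rule filterlim_at_top_mono[OF filterlim_div_2_minus_at_top[of 0]]) (auto intro!: always_eventually)
  ultimately have lim: "(\<lambda>n. \<rho> ^ 2 ^ (n - 2 - j) / measure std_normal {s..} ^ 2 ^ (n - n div 2 + 1)) \<longlonglongrightarrow> 0"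
    using \<rho> by (intro power_two_power_ratio_tendsto_0) (simp_all add: measure_std_normal_atLeast_pos)
  have "\<forall>\<^sub>F n in sequentially. 0 \<le> Pn_plus n (many_low_event n a (2 ^ (n - 2 - j)))"
    by (simp add: Pn_plus_def measure_nonneg)
  moreover have "\<forall>\<^sub>F n in sequentially. Pn_plus n (many_low_event n a (2 ^ (n - 2 - j)))
                   \<le> \<rho> ^ 2 ^ (n - 2 - j) / measure std_normal {s..} ^ 2 ^ (n - n div 2 + 1)"
    using eventually_ge_at_top[of "j + 2"]
    by eventually_elim (use Pn_plus_many_low_event_le s(1) in \<open>simp add: \<rho>_def\<close>)
  ultimately show ?thesis
    by (rule tendsto_sandwich[OF _ _ tendsto_const lim])
qed

section \<open>Under \<open>P\<^sub>n\<close> many low vertices are likely\<close>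

definition flip_below :: "nat \<Rightarrow> nat \<Rightarrow> vertex set \<Rightarrow> (vertex \<Rightarrow> real) \<Rightarrow> (vertex \<Rightarrow> real)" where
  "flip_below n j T g = (\<lambda>i\<in>Tn n - {[]}. (if j < length i \<and> take j i \<in> T then uminus else id) (g i))"

lemma flip_below_measurable: "flip_below n j T \<in> measurable (increments n) (increments n)"
  unfolding flip_below_def increments_def
  by (intro measurable_restrict measurable_compose[OF measurable_component_singleton]) auto

lemma distr_flip_below: "distr (increments n) (increments n) (flip_below n j T) = increments n"
proof -
  interpret product_prob_space "\<lambda>_. std_normal" "Tn n - {[]}"
    by (rule product_prob_spaceI) (rule prob_space_std_normal)
  have "distr std_normal std_normal uminus = std_normal"
    using distr_std_normal_uminus by (simp cong: distr_cong)
  then show ?thesis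
    unfolding flip_below_def increments_def
    by (intro distr_PiM_coordinatewise) (auto simp: finite_Tn distr_id)
qed

lemma path_sum_flip_below:
  assumes "y \<in> Tn n"
  shows "path_sum j (flip_below n j T g) y = (if take j y \<in> T then - path_sum j g y else path_sum j g y)"
proof -
  have "flip_below n j T g (take t y) = (if take j y \<in> T then - g (take t y) else g (take t y))"
    if "t \<in> {Suc j..length y}" for t
    using assms that by (auto simp: flip_below_def Tn_def min_def)
  then show ?thesis
    by (cases "take j y \<in> T") (simp_all add: path_sum_def sum_negf)
qed

definition rising_majority :: "nat \<Rightarrow> nat \<Rightarrow> (vertex \<Rightarrow> real) set" where
  "rising_majority n j = {g \<in> space (increments n). \<forall>z\<in>Ln j.
     card {y \<in> descendants (n - 1) z. path_sum j g y < 0} < card {y \<in> descendants (n - 1) z. 0 < path_sum j g y}}"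

lemma rising_majority_sets[measurable]: "rising_majority n j \<in> sets (increments n)"
proof -
  have fin: "finite (descendants (n - 1) z)" for z
    by (simp add: descendants_def finite_Ln)
  have "rising_majority n j = {g \<in> space (increments n). \<forall>z\<in>Ln j.
     real (card {y \<in> descendants (n - 1) z. path_sum j g y < 0})
       < real (card {y \<in> descendants (n - 1) z. 0 < path_sum j g y})}"
    by (simp add: rising_majority_def)
  also have "\<dots> = {g \<in> space (increments n). \<forall>z\<in>Ln j.
     (\<Sum>y\<in>descendants (n - 1) z. if path_sum j g y < 0 then 1 else 0 :: real)
       < (\<Sum>y\<in>descendants (n - 1) z. if 0 < path_sum j g y then 1 else 0)}"
    by (simp only: of_nat_card_filter[OF fin])
  also have "\<dots> \<in> sets (increments n)"
    using finite_Ln[of j] fin by measurable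
  finally show ?thesis .
qed

lemma flip_below_rising_majority_disjoint:
  assumes "T \<subseteq> Ln j" "T' \<subseteq> Ln j" "T \<noteq> T'"
    and "flip_below n j T g \<in> rising_majority n j"
  shows "flip_below n j T' g \<notin> rising_majority n j"
proof
  assume T': "flip_below n j T' g \<in> rising_majority n j"
  obtain z where z: "z \<in> Ln j" "z \<in> T \<longleftrightarrow> z \<notin> T'"
    using assms(1-3) by blast
  let ?D = "descendants (n - 1) z"
  have "path_sum j (flip_below n j T g) y = - path_sum j (flip_below n j T' g) y" if "y \<in> ?D" for y
  proof -
    have "y \<in> Tn n" "take j y = z"
      using that z(1) by (auto simp: descendants_def Ln_def Tn_def)
    then show ?thesis
      using z(2) by (simp add: path_sum_flip_below)
  qed
  then have "{y \<in> ?D. path_sum j (flip_below n j T g) y < 0} = {y \<in> ?D. 0 < path_sum j (flip_below n j T' g) y}"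
    "{y \<in> ?D. 0 < path_sum j (flip_below n j T g) y} = {y \<in> ?D. path_sum j (flip_below n j T' g) y < 0}"
    by auto
  then show False
    using assms(4) T' z(1) by (fastforce simp: rising_majority_def)
qed

lemma measure_rising_majority_le: "measure (increments n) (rising_majority n j) \<le> 1 / 2 ^ 2 ^ j"
proof -
  interpret prob_space "increments n" by (rule prob_space_increments)
  have "real (card (Pow (Ln j))) * prob (rising_majority n j) \<le> 1"
  proof (rule card_mult_prob_le_1_of_disjoint_preimages)
    show "disjoint_family_on (\<lambda>T. flip_below n j T -` rising_majority n j \<inter> space (increments n)) (Pow (Ln j))"
      unfolding disjoint_family_on_def using flip_below_rising_majority_disjoint by blast
  qed (simp_all add: finite_Ln flip_below_measurable distr_flip_below)
  then show ?thesis
    by (simp add: card_Pow finite_Ln card_Ln field_simps)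
qed

definition large_increment_event :: "nat \<Rightarrow> nat \<Rightarrow> real \<Rightarrow> (vertex \<Rightarrow> real) set" where
  "large_increment_event n j b = {g \<in> space (increments n). \<exists>i\<in>Tn j - {[]}. b < g i}"

lemma large_increment_event_sets[measurable]: "large_increment_event n j b \<in> sets (increments n)"
  unfolding large_increment_event_def using finite_Tn[of j] by measurable

lemma measure_large_increment_event_le:
  assumes "j \<le> n"
  shows "measure (increments n) (large_increment_event n j b) \<le> 2 ^ (j + 1) * measure std_normal {b<..}"
proof -
  interpret G: prob_space "increments n" by (rule prob_space_increments)
  interpret product_prob_space "\<lambda>_. std_normal" "Tn n - {[]}"
    by (rule product_prob_spaceI) (rule prob_space_std_normal)
  let ?K = "Tn j - {[]}"
  let ?E = "\<lambda>i. {g \<in> space (increments n). b < g i}"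
  have "measure (increments n) (large_increment_event n j b) = measure (increments n) (\<Union>i\<in>?K. ?E i)"
    by (rule arg_cong[where f = "measure (increments n)"]) (auto simp: large_increment_event_def)
  also have "\<dots> \<le> (\<Sum>i\<in>?K. measure (increments n) (?E i))"
    using finite_Tn by (intro G.finite_measure_subadditive_finite) auto
  also have "\<dots> = (\<Sum>i\<in>?K. measure std_normal {b<..})"
  proof (rule sum.cong)
    fix i assume "i \<in> ?K"
    then have "i \<in> Tn n - {[]}"
      using assms by (auto simp: Tn_def)
    then show "measure (increments n) (?E i) = measure std_normal {b<..}"
      using emeasure_PiM_Collect_single[of i "{b<..}"] by (simp add: increments_def measure_def)
  qed simp
  also have "\<dots> \<le> 2 ^ (j + 1) * measure std_normal {b<..}"
  proof -
    have "card ?K \<le> 2 ^ (j + 1)"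
      using card_mono[OF finite_Tn, of ?K j] card_Tn_le[of j] by auto
    then have "real (card ?K) \<le> 2 ^ (j + 1)"
      using of_nat_mono by fastforce
    then show ?thesis
      by (simp add: mult_right_mono)
  qed
  finally show ?thesis .
qed

lemma brw_le_path_sum:
  assumes "g \<in> space (increments n)" "g \<notin> large_increment_event n j b"
    and "y \<in> Tn n" "j \<le> length y"
  shows "brw n g y \<le> j * b + path_sum j g y"
proof -
  have "path_sum 0 g (take j y) = (\<Sum>t\<in>{Suc 0..j}. g (take t y))"
    using assms(4) by (simp add: path_sum_def min_absorb2)
  also have "\<dots> \<le> (\<Sum>t\<in>{Suc 0..j}. b)"
  proof (rule sum_mono)
    fix t assume "t \<in> {Suc 0..j}"
    then have "take t y \<in> Tn j - {[]}"
      using assms(4) by (auto simp: Tn_def)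
    then show "g (take t y) \<le> b"
      using assms(1,2) by (auto simp: large_increment_event_def not_less)
  qed
  finally show ?thesis
    using assms(3,4) by (simp add: brw_eq_path_sum path_sum_split[of j y])
qed

lemma brw_in_many_low_event:
  assumes "j + 2 \<le> n" and g: "g \<in> space (increments n)"
    and "g \<notin> large_increment_event n j b" "g \<notin> rising_majority n j"
  shows "brw n g \<in> many_low_event n (j * b) (2 ^ (n - 2 - j))"
proof -
  obtain z where z: "z \<in> Ln j"
    and "card {y \<in> descendants (n - 1) z. 0 < path_sum j g y}
           \<le> card {y \<in> descendants (n - 1) z. path_sum j g y < 0}"
    using assms(4) g by (auto simp: rising_majority_def not_less)
  then have "card (descendants (n - 1) z) \<le> 2 * card {y \<in> descendants (n - 1) z. path_sum j g y \<le> 0}"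
    by (intro card_le_twice_card_nonpos) (simp_all add: descendants_def finite_Ln)
  moreover have "card (descendants (n - 1) z) = 2 * 2 ^ (n - 2 - j)"
  proof -
    have "n - 1 - j = Suc (n - 2 - j)"
      using assms(1) by arith
    then show ?thesis
      using z card_descendants[of z "n - 1"] assms(1) by (simp add: Ln_def)
  qed
  ultimately have "2 ^ (n - 2 - j) \<le> card {y \<in> descendants (n - 1) z. path_sum j g y \<le> 0}"
    by linarith
  also have "\<dots> \<le> card {y \<in> Ln (n - 1). brw n g y \<le> j * b}"
  proof (rule card_mono)
    show "{y \<in> descendants (n - 1) z. path_sum j g y \<le> 0} \<subseteq> {y \<in> Ln (n - 1). brw n g y \<le> j * b}"
    proof
      fix y assume y: "y \<in> {y \<in> descendants (n - 1) z. path_sum j g y \<le> 0}"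
      then have "y \<in> Ln (n - 1)" "y \<in> Tn n" "j \<le> length y"
        using z assms(1) by (auto simp: descendants_def Ln_def Tn_def)
      then show "y \<in> {y \<in> Ln (n - 1). brw n g y \<le> j * b}"
        using y brw_le_path_sum[OF g assms(3), of y] by simp
    qed
  qed (simp add: finite_Ln)
  finally show ?thesis
    using measurable_space[OF brw_measurable g] by (simp add: many_low_event_def)
qed

lemma measure_Pn_many_low_event_ge:
  assumes "j + 2 \<le> n"
  shows "1 - 2 ^ (j + 1) * measure std_normal {b<..} - 1 / 2 ^ 2 ^ j
           \<le> measure (Pn n) (many_low_event n (j * b) (2 ^ (n - 2 - j)))"
proof -
  interpret G: prob_space "increments n" by (rule prob_space_increments)
  let ?A = "many_low_event n (j * b) (2 ^ (n - 2 - j))"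
  let ?P = "brw n -` ?A \<inter> space (increments n)"
  have "space (increments n) - ?P \<subseteq> large_increment_event n j b \<union> rising_majority n j"
    using brw_in_many_low_event[OF assms] by blast
  then have "1 - measure (increments n) ?P
               \<le> measure (increments n) (large_increment_event n j b \<union> rising_majority n j)"
    by (simp add: G.prob_compl[symmetric] G.finite_measure_mono)
  also have "\<dots> \<le> 2 ^ (j + 1) * measure std_normal {b<..} + 1 / 2 ^ 2 ^ j"
    using assms measure_large_increment_event_le measure_rising_majority_le
    by (intro order.trans[OF measure_Un_le add_mono]) auto
  finally show ?thesis
    by (simp add: measure_Pn)
qed

section \<open>Separating events\<close>

definition separation_error :: "nat \<Rightarrow> (vertex \<Rightarrow> real) \<Rightarrow> (vertex \<Rightarrow> real) set \<Rightarrow> real" where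
  "separation_error n \<mu> A =
     max (1 - measure (Pn n) A) (Pn_plus n {h \<in> space (field_space n). shift n \<mu> h \<in> A})"

lemma separation_error_nonneg: "0 \<le> separation_error n \<mu> A"
  by (simp add: separation_error_def Pn_plus_def measure_nonneg max.coboundedI2)

lemma separation_error_tendsto_0D:
  assumes lim: "(\<lambda>n. separation_error n (\<mu> n) (A n)) \<longlonglongrightarrow> 0"
  shows "(\<lambda>n. measure (Pn n) (A n)) \<longlonglongrightarrow> 1"
    and "(\<lambda>n. Pn_plus n {h \<in> space (field_space n). shift n (\<mu> n) h \<in> A n}) \<longlonglongrightarrow> 0"
proof -
  have "\<forall>\<^sub>F n in sequentially. 0 \<le> 1 - measure (Pn n) (A n)"
    by (simp add: prob_space.prob_le_1[OF prob_space_Pn])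
  moreover have "\<forall>\<^sub>F n in sequentially. 1 - measure (Pn n) (A n) \<le> separation_error n (\<mu> n) (A n)"
    by (simp add: separation_error_def)
  ultimately have "(\<lambda>n. 1 - measure (Pn n) (A n)) \<longlonglongrightarrow> 0"
    by (rule tendsto_sandwich[OF _ _ tendsto_const lim])
  from tendsto_diff[OF tendsto_const[of 1] this]
  show "(\<lambda>n. measure (Pn n) (A n)) \<longlonglongrightarrow> 1"
    by simp
  have "\<forall>\<^sub>F n in sequentially. 0 \<le> Pn_plus n {h \<in> space (field_space n). shift n (\<mu> n) h \<in> A n}"
    by (simp add: Pn_plus_def measure_nonneg)
  moreover have "\<forall>\<^sub>F n in sequentially.
      Pn_plus n {h \<in> space (field_space n). shift n (\<mu> n) h \<in> A n} \<le> separation_error n (\<mu> n) (A n)"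
    by (simp add: separation_error_def)
  ultimately show "(\<lambda>n. Pn_plus n {h \<in> space (field_space n). shift n (\<mu> n) h \<in> A n}) \<longlonglongrightarrow> 0"
    by (rule tendsto_sandwich[OF _ _ tendsto_const lim])
qed

lemma many_low_events_eventually_separate:
  assumes "0 < e"
  shows "\<exists>A. (\<forall>n. A n \<in> sets (field_space n)) \<and>
           (\<forall>\<^sub>F n in sequentially. separation_error n (\<mu> n) (A n) \<le> e)"
proof -
  obtain j where j: "(1 / 2) ^ j < e / 2"
    using real_arch_pow_inv[of "e / 2" "1 / 2 :: real"] assms by auto
  have "(1 / 2 :: real) ^ 2 ^ j \<le> (1 / 2) ^ j"
    by (intro power_decreasing) (simp_all add: less_imp_le[OF less_exp])
  then have j': "1 / 2 ^ 2 ^ j \<le> e / 2"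
    using j by (simp add: power_divide)
  have "\<forall>\<^sub>F b in at_top. measure std_normal {b<..} < e / 2 / 2 ^ (j + 1)"
    using assms by (intro order_tendstoD(2)[OF measure_std_normal_greaterThan_tendsto_0]) simp
  then obtain b where "measure std_normal {b<..} < e / 2 / 2 ^ (j + 1)"
    by (auto simp: eventually_at_top_linorder)
  then have b: "2 ^ (j + 1) * measure std_normal {b<..} \<le> e / 2"
    by (simp add: field_simps)
  define A where "A n = many_low_event n (j * b) (2 ^ (n - 2 - j))" for n
  have "\<forall>\<^sub>F n in sequentially. 1 - measure (Pn n) (A n) \<le> e"
    using eventually_ge_at_top[of "j + 2"]
  proof eventually_elim
    case (elim n)
    then show ?case
      using measure_Pn_many_low_event_ge[OF elim, of b] b j' unfolding A_def by linarith
  qed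
  moreover have "\<forall>\<^sub>F n in sequentially. Pn_plus n (A n) < e"
    unfolding A_def using assms by (intro order_tendstoD(2)[OF Pn_plus_many_low_event_tendsto_0])
  ultimately have "\<forall>\<^sub>F n in sequentially. separation_error n (\<mu> n) (A n) \<le> e"
    using eventually_ge_at_top[of 1]
    by eventually_elim (simp add: separation_error_def A_def shift_preimage_many_low_event)
  moreover have "\<forall>n. A n \<in> sets (field_space n)"
    by (simp add: A_def)
  ultimately show ?thesis
    by blast
qed

theorem corollary1p19:
  fixes \<mu> :: "nat \<Rightarrow> vertex \<Rightarrow> real"
  shows "\<exists>A :: nat \<Rightarrow> (vertex \<Rightarrow> real) set.
           (\<forall>n. A n \<in> sets (field_space n)) \<and>
           (\<lambda>n. measure (Pn n) (A n)) \<longlonglongrightarrow> 1 \<and>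
           (\<lambda>n. Pn_plus n {h \<in> space (field_space n). shift n (\<mu> n) h \<in> A n}) \<longlonglongrightarrow> 0"
proof -
  obtain A where A: "\<forall>n. A n \<in> sets (field_space n)" "(\<lambda>n. separation_error n (\<mu> n) (A n)) \<longlonglongrightarrow> 0"
    using diagonal_tendsto_0[where D = "\<lambda>n. separation_error n (\<mu> n)",
        OF many_low_events_eventually_separate separation_error_nonneg]
    by blast
  then show ?thesis
    using separation_error_tendsto_0D[OF A(2)] by blast
qed

end
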